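(* Consider the reduced (limit) problem of the repeated wage theft game with fixed strategies and time-converging worker forecasts, as described in the context, and suppose $C'(0)<Py_H-Py_L$. Then there exists an optimal solution $(a^*,w_H^*,w_L^*,b_H^*,b_L^* )$ of this problem with $a^*\in(0,1)$ and $b_H^*=b_L^*=0$.
   Context: Fix $P>0$, $y_H>y_L\ge0$, a real number $u$ and $\gamma\in(0,1]$. Let $C:[0,1)\to\mathbb{R}$ satisfy $C(0)=0$, increasing, strictly convex, twice differentiable, $C(a)\to\infty$ as $a\to1$; let $\eta:[0,\infty)\to\mathbb{R}$ be strictly convex, increasing, twice differentiable with $\eta(0)=0$. In the repeated wage theft game, in each period $t$ the employer promises wages $w_i^t$ and steals $b_i^t$ ($i\in\{H,L\}$), and the worker, forecasting theft $\hat b_i^t$ from past thefts $b_i^1,\dots,b_i^{t-1}$, chooses effort as if receiving $(w_i^t-\hat b_i^t)^+$. A forecast is time-converging if whenever $b_i^t=b_i$ for all $t\ge t_0$, $\hat b_i^t\to b_i$ as $t\to\infty$. When the employer uses a fixed strategy $(w_H,w_L,b_H,b_L)$ in every period and the worker uses a time-converging forecast, the game reduces to the following problem: choose $a,w_H,w_L,b_H,b_L$ to maximize $a\,(Py_H-w_H+b_H-\gamma\eta(b_H))+(1-a)\,(Py_L-w_L+b_L-\gamma\eta(b_L))$ subject to $a\in\arg\max_{a'\in[0,1)}\{a'(w_H-b_H)+(1-a')(w_L-b_L)-C(a')\}$; $a(w_H-b_H)+(1-a)(w_L-b_L)-C(a)\ge u$; $0\le b_L\le w_L$, $0\le b_H\le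 w_H$; $a\in[0,1)$. *)

theory Defs
  imports "HOL-Analysis.Analysis"
begin

definition strictly_convex_on :: "real set \<Rightarrow> (real \<Rightarrow> real) \<Rightarrow> bool" where
  "strictly_convex_on S f \<longleftrightarrow> convex S \<and>
     (\<forall>x\<in>S. \<forall>y\<in>S. \<forall>t. x \<noteq> y \<and> 0 < t \<and> t < 1 \<longrightarrow>
        f (t * x + (1 - t) * y) < t * f x + (1 - t) * f y)"

definition wt_obj :: "real \<Rightarrow> real \<Rightarrow> real \<Rightarrow> real \<Rightarrow> (real \<Rightarrow> real) \<Rightarrow> real \<Rightarrow> real \<Rightarrow> real \<Rightarrow> real \<Rightarrow> real \<Rightarrow> real" where
  "wt_obj P yH yL \<gamma> \<eta> a wH wL bH bL =
     a * (P * yH - wH + bH - \<gamma> * \<eta> bH) + (1 - a) * (P * yL - wL + bL - \<gamma> * \<eta> bL)"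

definition wt_worker :: "(real \<Rightarrow> real) \<Rightarrow> real \<Rightarrow> real \<Rightarrow> real \<Rightarrow> real \<Rightarrow> real \<Rightarrow> real" where
  "wt_worker C wH wL bH bL a' = a' * (wH - bH) + (1 - a') * (wL - bL) - C a'"

definition wt_feasible :: "(real \<Rightarrow> real) \<Rightarrow> real \<Rightarrow> real \<Rightarrow> real \<Rightarrow> real \<Rightarrow> real \<Rightarrow> real \<Rightarrow> bool" where
  "wt_feasible C u a wH wL bH bL \<longleftrightarrow>
     a \<in> {0..<1} \<and>
     (\<forall>a'\<in>{0..<1}. wt_worker C wH wL bH bL a' \<le> wt_worker C wH wL bH bL a) \<and>
     wt_worker C wH wL bH bL a \<ge> u \<and>
     0 \<le> bL \<and> bL \<le> wL \<and> 0 \<le> bH \<and> bH \<le> wH"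

definition wt_optimal :: "real \<Rightarrow> real \<Rightarrow> real \<Rightarrow> real \<Rightarrow> (real \<Rightarrow> real) \<Rightarrow> (real \<Rightarrow> real) \<Rightarrow> real
     \<Rightarrow> real \<Rightarrow> real \<Rightarrow> real \<Rightarrow> real \<Rightarrow> real \<Rightarrow> bool" where
  "wt_optimal P yH yL \<gamma> \<eta> C u a wH wL bH bL \<longleftrightarrow>
     wt_feasible C u a wH wL bH bL \<and>
     (\<forall>a' wH' wL' bH' bL'. wt_feasible C u a' wH' wL' bH' bL' \<longrightarrow>
        wt_obj P yH yL \<gamma> \<eta> a' wH' wL' bH' bL' \<le> wt_obj P yH yL \<gamma> \<eta> a wH wL bH bL)"

end

theory Submission
  imports Defs
begin

text \<open>
  Since theft is costly to the employer (\<open>\<gamma> \<eta> \<ge> 0\<close>) and the worker only responds to net wages,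
  any contract implementing effort \<open>a > 0\<close> must have net wage spread \<open>C'(a)\<close> (first-order
  condition of the worker) and a nonnegative low net wage, and it must satisfy participation.
  Hence its expected net wage is at least \<open>max (a C'(a)) (u + C(a))\<close>, and the theft-free
  contract paying exactly this bound is feasible. The employer's problem thus reduces to
  maximising a continuous function of \<open>a\<close> alone, which tends to \<open>-\<infinity>\<close> as \<open>a \<rightarrow> 1\<close> and,
  because \<open>C'(0) < P y\<^sub>H - P y\<^sub>L\<close>, increases strictly somewhere to the right of \<open>0\<close>; so it has
  a maximiser in \<open>(0,1)\<close>.
\<close>

lemma strictly_convex_on_imp_convex_on:
  assumes "strictly_convex_on S f"
  shows "convex_on S f"
proof (rule convex_onI)
  show "convex S" using assms unfolding strictly_convex_on_def by blast
next
  fix t x y :: real assume t: "0 < t" "t < 1" and xy: "x \<in> S" "y \<in> S"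
  show "f ((1 - t) *\<^sub>R x + t *\<^sub>R y) \<le> (1 - t) * f x + t * f y"
  proof (cases "x = y")
    case False
    have "\<forall>x\<in>S. \<forall>y\<in>S. \<forall>t. x \<noteq> y \<and> 0 < t \<and> t < 1 \<longrightarrow>
        f (t * x + (1 - t) * y) < t * f x + (1 - t) * f y"
      using assms unfolding strictly_convex_on_def by blast
    from this[rule_format, of x y "1 - t"] xy False t show ?thesis by simp
  qed (simp add: algebra_simps)
qed

lemma continuous_on_attains_sup_atLeastLessThan:
  fixes f :: "real \<Rightarrow> real"
  assumes "a < b" and cont: "continuous_on {a..<b} f" and lim: "filterlim f at_bot (at_left b)"
  obtains x where "x \<in> {a..<b}" "\<And>y. y \<in> {a..<b} \<Longrightarrow> f y \<le> f x"
proof -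
  have "\<forall>\<^sub>F y in at_left b. f y < f a"
    using lim unfolding filterlim_at_bot_dense by blast
  then obtain c where "c < b" and c: "\<And>y. c < y \<Longrightarrow> y < b \<Longrightarrow> f y < f a"
    unfolding eventually_at_left_field by blast
  define c' where "c' = max a c"
  have "{a..c'} \<subseteq> {a..<b}" using \<open>a < b\<close> \<open>c < b\<close> by (auto simp: c'_def)
  then obtain x where x: "x \<in> {a..c'}" and max: "\<And>y. y \<in> {a..c'} \<Longrightarrow> f y \<le> f x"
    using continuous_attains_sup[of "{a..c'}" f] continuous_on_subset[OF cont]
    by (auto simp: c'_def)
  show thesis
  proof (rule that)
    show "x \<in> {a..<b}" using x \<open>{a..c'} \<subseteq> {a..<b}\<close> by blast
    fix y assume y: "y \<in> {a..<b}"
    show "f y \<le> f x"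
    proof (cases "y \<le> c'")
      case False
      then have "f y < f a" using c y by (auto simp: c'_def)
      also have "f a \<le> f x" using max by (simp add: c'_def)
      finally show ?thesis by simp
    qed (use y max in auto)
  qed
qed

lemma wt_net_wage_spread_eq_deriv:
  assumes ic: "\<forall>a'\<in>{0..<1}. wt_worker C wH wL bH bL a' \<le> wt_worker C wH wL bH bL a"
    and a: "0 < a" "a < 1" and C': "(C has_real_derivative c) (at a)"
  shows "(wH - bH) - (wL - bL) = c"
proof -
  have der: "((wt_worker C wH wL bH bL) has_real_derivative (wH - bH) - (wL - bL) - c) (at a)"
    unfolding wt_worker_def by (auto intro!: derivative_eq_intros C')
  have local_max: "\<forall>y. \<bar>a - y\<bar> < min a (1 - a) \<longrightarrow> wt_worker C wH wL bH bL y \<le> wt_worker C wH wL bH bL a"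
  proof (intro allI impI)
    fix y assume "\<bar>a - y\<bar> < min a (1 - a)"
    then have "y \<in> {0..<1}" by auto
    with ic show "wt_worker C wH wL bH bL y \<le> wt_worker C wH wL bH bL a" by blast
  qed
  have "(wH - bH) - (wL - bL) - c = 0"
    by (rule DERIV_local_max[OF der _ local_max]) (use a in simp)
  then show ?thesis by simp
qed

definition wt_value :: "real \<Rightarrow> real \<Rightarrow> real \<Rightarrow> (real \<Rightarrow> real) \<Rightarrow> (real \<Rightarrow> real) \<Rightarrow> real \<Rightarrow> real \<Rightarrow> real" where
  "wt_value P yH yL C C' u a = P * yL + a * (P * yH - P * yL) - max (a * C' a) (u + C a)"

lemma wt_obj_le_value:
  assumes F: "wt_feasible C u a wH wL bH bL"
    and C': "\<And>x. 0 < x \<Longrightarrow> x < 1 \<Longrightarrow> (C has_real_derivative C' x) (at x)"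
    and \<eta>_nonneg: "\<And>x. 0 \<le> x \<Longrightarrow> 0 \<le> \<eta> x" and "0 \<le> \<gamma>"
  shows "wt_obj P yH yL \<gamma> \<eta> a wH wL bH bL \<le> wt_value P yH yL C C' u a"
proof -
  have a: "0 \<le> a" "a < 1" and b: "0 \<le> bL" "bL \<le> wL" "0 \<le> bH" "bH \<le> wH"
    and ic: "\<forall>a'\<in>{0..<1}. wt_worker C wH wL bH bL a' \<le> wt_worker C wH wL bH bL a"
    and pc: "u \<le> wt_worker C wH wL bH bL a"
    using F by (auto simp: wt_feasible_def)
  define wage where "wage = (wL - bL) + a * ((wH - bH) - (wL - bL))"
  have "0 \<le> \<gamma> * (a * \<eta> bH + (1 - a) * \<eta> bL)"
    using \<open>0 \<le> \<gamma>\<close> a b \<eta>_nonneg by simp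
  then have obj: "wt_obj P yH yL \<gamma> \<eta> a wH wL bH bL \<le> P * yL + a * (P * yH - P * yL) - wage"
    unfolding wt_obj_def wage_def by (simp add: algebra_simps)
  have "u + C a \<le> wage"
    using pc unfolding wt_worker_def wage_def by (simp add: algebra_simps)
  moreover have "a * C' a \<le> wage"
  proof (cases "a = 0")
    case False
    then have "(wH - bH) - (wL - bL) = C' a" using wt_net_wage_spread_eq_deriv[OF ic] C'[of a] a by simp
    then show ?thesis using b by (simp add: wage_def)
  qed (use b in \<open>simp add: wage_def\<close>)
  ultimately show ?thesis using obj unfolding wt_value_def by linarith
qed

lemma wt_value_attained:
  assumes a: "0 < a" "a < 1"
    and conv: "convex_on {0..<1} C" and mono: "mono_on {0..<1} C"
    and C': "\<And>x. 0 < x \<Longrightarrow> x < 1 \<Longrightarrow> (C has_real_derivative C' x) (at x)"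
    and \<eta>0: "\<eta> 0 = 0"
  obtains wH wL where "wt_feasible C u a wH wL 0 0"
    and "wt_obj P yH yL \<gamma> \<eta> a wH wL 0 0 = wt_value P yH yL C C' u a"
proof -
  have tangent: "C' a * (x - a) \<le> C x - C a" if "x \<in> {0..<1}" for x
    using convex_on_imp_above_tangent[OF conv _ _ that C'[OF a, THEN has_field_derivative_at_within]] a
    by simp
  have "0 \<le> C' a"
    using mono_on_imp_deriv_nonneg[OF mono C'[OF a]] a by simp
  define wL where "wL = max 0 (u + C a - a * C' a)"
  define wH where "wH = wL + C' a"
  have worker: "wt_worker C wH wL 0 0 x = wL + x * C' a - C x" for x
    by (simp add: wt_worker_def wH_def algebra_simps)
  have "wt_feasible C u a wH wL 0 0"
    unfolding wt_feasible_def worker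
    using a tangent \<open>0 \<le> C' a\<close> by (auto simp: wL_def wH_def algebra_simps)
  moreover have "wL + a * C' a = max (a * C' a) (u + C a)"
    by (simp add: wL_def max_def)
  then have "wt_obj P yH yL \<gamma> \<eta> a wH wL 0 0 = wt_value P yH yL C C' u a"
    unfolding wt_obj_def wt_value_def wH_def using \<eta>0 by (simp add: algebra_simps)
  ultimately show thesis by (rule that)
qed

lemma wt_optimal_if_value_maximal:
  assumes a: "0 < a" "a < 1"
    and a_max: "\<And>x. x \<in> {0..<1} \<Longrightarrow> wt_value P yH yL C C' u x \<le> wt_value P yH yL C C' u a"
    and conv: "convex_on {0..<1} C" and mono: "mono_on {0..<1} C"
    and C': "\<And>x. 0 < x \<Longrightarrow> x < 1 \<Longrightarrow> (C has_real_derivative C' x) (at x)"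
    and \<eta>0: "\<eta> 0 = 0" and \<eta>mono: "mono_on {0..} \<eta>" and "0 \<le> \<gamma>"
  shows "\<exists>wH wL. wt_optimal P yH yL \<gamma> \<eta> C u a wH wL 0 0"
proof -
  obtain wH wL where feas: "wt_feasible C u a wH wL 0 0"
    and obj: "wt_obj P yH yL \<gamma> \<eta> a wH wL 0 0 = wt_value P yH yL C C' u a"
    by (rule wt_value_attained[where \<eta> = \<eta>, OF a conv mono C' \<eta>0])
  have \<eta>_nonneg: "0 \<le> \<eta> x" if "0 \<le> x" for x
    using mono_onD[OF \<eta>mono, of 0 x] that \<eta>0 by simp
  have "wt_obj P yH yL \<gamma> \<eta> a' wH' wL' bH' bL' \<le> wt_obj P yH yL \<gamma> \<eta> a wH wL 0 0"
    if F: "wt_feasible C u a' wH' wL' bH' bL'" for a' wH' wL' bH' bL'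
  proof -
    have "a' \<in> {0..<1}" using F by (simp add: wt_feasible_def)
    have "wt_obj P yH yL \<gamma> \<eta> a' wH' wL' bH' bL' \<le> wt_value P yH yL C C' u a'"
      by (rule wt_obj_le_value[OF F C' \<eta>_nonneg \<open>0 \<le> \<gamma>\<close>])
    also have "\<dots> \<le> wt_value P yH yL C C' u a" using a_max[OF \<open>a' \<in> {0..<1}\<close>] .
    finally show ?thesis unfolding obj .
  qed
  with feas show ?thesis unfolding wt_optimal_def by blast
qed

lemma wt_value_tendsto_at_bot:
  assumes "filterlim C at_top (at_left 1)" and "P * yL \<le> P * yH"
  shows "filterlim (wt_value P yH yL C C' u) at_bot (at_left 1)"
  unfolding filterlim_at_bot
proof
  fix Z
  have "\<forall>\<^sub>F x in at_left 1. P * yH - u - Z \<le> C x \<and> x \<in> {0<..<1}"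
    using assms(1) eventually_at_left_real[of 0 1] unfolding filterlim_at_top
    by (auto intro: eventually_conj)
  then show "\<forall>\<^sub>F x in at_left 1. wt_value P yH yL C C' u x \<le> Z"
  proof (rule eventually_mono)
    fix x assume x: "P * yH - u - Z \<le> C x \<and> x \<in> {0<..<1}"
    then have "x * (P * yH - P * yL) \<le> P * yH - P * yL"
      using assms(2) by (simp add: mult_left_le_one_le)
    then show "wt_value P yH yL C C' u x \<le> Z"
      using x unfolding wt_value_def by linarith
  qed
qed

lemma wt_value_exceeds_at_zero:
  assumes conv: "convex_on {0..<1} C" and C0: "C 0 = 0"
    and C': "\<And>x. 0 < x \<Longrightarrow> x < 1 \<Longrightarrow> (C has_real_derivative C' x) (at x)"
    and cont: "continuous (at 0 within {0..<1}) C'"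
    and small: "C' 0 < P * yH - P * yL"
  obtains a where "0 < a" "a < 1" "wt_value P yH yL C C' u 0 < wt_value P yH yL C C' u a"
proof -
  obtain d where "d > 0"
    and d: "\<And>x. x \<in> {0..<1} \<Longrightarrow> dist x 0 < d \<Longrightarrow> dist (C' x) (C' 0) < P * yH - P * yL - C' 0"
    using cont small unfolding continuous_within_eps_delta by (metis diff_gt_0_iff_gt)
  define a where "a = min (d / 2) (1 / 2)"
  have a: "0 < a" "a < 1" "a < d" using \<open>d > 0\<close> by (auto simp: a_def)
  then have "C' a < P * yH - P * yL" using d[of a] by (auto simp: dist_real_def)
  then have gain: "a * C' a < a * (P * yH - P * yL)" using a by simp
  have "C a \<le> a * C' a"
    using convex_on_imp_above_tangent[OF conv _ _ _ C'[OF a(1,2), THEN has_field_derivative_at_within], of 0]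
      a C0 by (simp add: mult.commute)
  then have "max (a * C' a) (u + C a) \<le> a * C' a + max 0 u" by simp
  with gain have "wt_value P yH yL C C' u 0 < wt_value P yH yL C C' u a"
    unfolding wt_value_def using C0 by simp
  with a show thesis by (intro that) auto
qed

theorem theorem2:
  fixes P yH yL u \<gamma> :: real
    and C C1 C2 \<eta> \<eta>1 \<eta>2 :: "real \<Rightarrow> real"
  assumes P: "P > 0" and y: "yH > yL" "yL \<ge> 0" and \<gamma>: "0 < \<gamma>" "\<gamma> \<le> 1"
    and C0: "C 0 = 0"
    and Cmono: "mono_on {0..<1} C"
    and Cconv: "strictly_convex_on {0..<1} C"
    and C1: "\<And>x. x \<in> {0..<1} \<Longrightarrow> (C has_real_derivative C1 x) (at x within {0..<1})"
    and C2: "\<And>x. x \<in> {0..<1} \<Longrightarrow> (C1 has_real_derivative C2 x) (at x within {0..<1})"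
    and Clim: "filterlim C at_top (at_left 1)"
    and \<eta>0: "\<eta> 0 = 0"
    and \<eta>mono: "mono_on {0..} \<eta>"
    and \<eta>conv: "strictly_convex_on {0..} \<eta>"
    and \<eta>1: "\<And>x. x \<in> {0..} \<Longrightarrow> (\<eta> has_real_derivative \<eta>1 x) (at x within {0..})"
    and \<eta>2: "\<And>x. x \<in> {0..} \<Longrightarrow> (\<eta>1 has_real_derivative \<eta>2 x) (at x within {0..})"
    and hC: "C1 0 < P * yH - P * yL"
  shows "\<exists>a wH wL. wt_optimal P yH yL \<gamma> \<eta> C u a wH wL 0 0 \<and> 0 < a \<and> a < 1"
proof -
  let ?V = "wt_value P yH yL C C1 u"
  have conv: "convex_on {0..<1} C" using Cconv by (rule strictly_convex_on_imp_convex_on)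
  have C1_at: "(C has_real_derivative C1 x) (at x)" if "0 < x" "x < 1" for x
    using C1[of x] that at_within_interior[of x "{0..<1}"] by simp
  have "continuous_on {0..<1} ?V"
    unfolding wt_value_def using DERIV_continuous_on[OF C1] DERIV_continuous_on[OF C2]
    by (intro continuous_intros)
  moreover have "filterlim ?V at_bot (at_left 1)"
    using wt_value_tendsto_at_bot[OF Clim] P y by simp
  ultimately obtain a where a: "a \<in> {0..<1}" and a_max: "\<And>x. x \<in> {0..<1} \<Longrightarrow> ?V x \<le> ?V a"
    using continuous_on_attains_sup_atLeastLessThan[of 0 1 ?V] by auto
  obtain a1 where a1: "0 < a1" "a1 < 1" "?V 0 < ?V a1"
    using wt_value_exceeds_at_zero[OF conv C0 C1_at DERIV_continuous[OF C2[of 0]] hC] by auto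
  have "a \<noteq> 0"
    using a_max[of a1] a1 by auto
  with a have a_pos: "0 < a" and a_lt: "a < 1" by auto
  moreover have "0 \<le> \<gamma>" using \<gamma> by simp
  ultimately show ?thesis
    using wt_optimal_if_value_maximal[OF a_pos a_lt a_max conv Cmono C1_at \<eta>0 \<eta>mono] by blast
qed

end
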